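(* Let $t_n>0$ be a sequence with $t_n\to 0$ and put $r_n=1/t_n$. For each $n$ let $(x_n,y_n,z_n)$ be a point of the model $\mathcal H_{t_n}$ of hyperbolic space described in the context, and let $C_n\subset\mathcal X_{t_n}$ be the corresponding curve, written in the form $$a^{00}_n+a^{10}_n\zeta-\tfrac{1}{t_n}\eta+a^{11}_n\zeta\eta=0 .$$ Suppose that $a^{00}_n$, $a^{11}_n$ and $a^{10}_n-1/t_n$ have finite limits $A^{00}$, $A^{11}$, $A^{10}$ respectively. Then $(x_n,y_n,z_n)$ converges in $\mathbb R^3$ to a point $(x,y,z)$, and $(x,y,z)$ is the point of Euclidean $\mathbb R^3$ whose associated curve in $\mathcal X_0=T\mathbb P^1$ is $w=A^{00}+A^{10}\zeta+A^{11}\zeta^2$.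
   Context: The complex 3-manifold $\mathcal X$ is obtained by gluing $U_0=\{(\zeta,w,t)\in\mathbb C^3:\ |\zeta|^2+tw\bar\zeta+1\neq0\}$ and $U_1=\{(\tilde\zeta,\tilde w,\tilde t)\in\mathbb C^3:\ |\tilde\zeta|^2+\tilde t\tilde w\bar{\tilde\zeta}+1\neq 0\}$ over $\zeta,\tilde\zeta\ne0$, $\zeta+tw\neq0$, $\tilde\zeta+\tilde t\tilde w\neq0$, via $\tilde\zeta=1/\zeta$, $\tilde w=-w/((\zeta+tw)\zeta)$, $\tilde t=t$. Let $\pi:\mathcal X\to\mathbb C$, $\pi(\zeta,w,t)=t$, and $\mathcal X_t=\pi^{-1}(t)$. Then $\mathcal X_0=T\mathbb P^1$ with $\zeta$ the affine coordinate on $\mathbb P^1$ and $w$ the fibre coordinate of $w\,\partial/\partial\zeta$. For $t\neq0$ put $\eta=\zeta+tw$ (and $\tilde\eta=\tilde\zeta+t\tilde w=1/\eta$); then $(\zeta,\eta)$ identify $\mathcal X_t$ with $\mathbb P^1\times\mathbb P^1-\overline\Delta$, where $\overline\Delta=\{(\zeta,-1/\bar\zeta)\}$ is the antidiagonal. The real structure is $\sigma(\zeta,w,t)=\bigl(-1/(\bar\zeta+\bar t\bar w),\ -\bar w/((\bar\zeta+\bar t\bar w)\bar\zeta),\ \bar t\bigr)$, i.e. $\sigma(\zeta,\eta,t)=(-1/\bar\eta,-1/\bar\zeta,\bar t)$ for $t\ne0$. For $t>0$ and $r=1/t$, let $\mathcal H_t=\{(x,y,z)\in\mathbb R^3: z>-r\}$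 with metric $\frac{r^2}{(z+r)^2}(dx^2+dy^2+dz^2)$ (a hyperbolic space of constant curvature determined by $t$, tending to Euclidean $\mathbb R^3$ as $t\to0$). The point $(x,y,z)\in\mathcal H_t$ corresponds to the $\sigma$-invariant $(1,1)$-curve in $\mathcal X_t$ $$(x+iy)+2z\zeta-(x-iy)\zeta\eta+r(\zeta-\eta)+\frac{x^2+y^2+z^2}{r}\zeta=0 .$$ A point $(x,y,z)$ of Euclidean $\mathbb R^3$ corresponds to the curve $w=(x+iy)+2z\zeta-(x-iy)\zeta^2$ in $T\mathbb P^1=\mathcal X_0$. *)

theory Defs
  imports "HOL-Analysis.Analysis"
begin

definition in_H :: "real \<Rightarrow> real \<Rightarrow> real \<Rightarrow> real \<Rightarrow> bool" where
  "in_H t x y z \<longleftrightarrow> z > - (1 / t)"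

text \<open>Left-hand side of the equation of the sigma-invariant (1,1)-curve in X_t
  corresponding to (x,y,z) in H_t, in the coordinates (zeta, eta), r = 1/t.\<close>
definition hyp_curve :: "real \<Rightarrow> real \<Rightarrow> real \<Rightarrow> real \<Rightarrow> complex \<Rightarrow> complex \<Rightarrow> complex" where
  "hyp_curve t x y z \<zeta> \<eta> =
     (let r = 1 / t in
       Complex x y + of_real (2 * z) * \<zeta> - Complex x (- y) * \<zeta> * \<eta>
       + of_real r * (\<zeta> - \<eta>) + of_real ((x\<^sup>2 + y\<^sup>2 + z\<^sup>2) / r) * \<zeta>)"

text \<open>Right-hand side w = ... of the curve in T P^1 = X_0 corresponding to a point of R^3.\<close>
definition euclid_curve :: "real \<Rightarrow> real \<Rightarrow> real \<Rightarrow> complex \<Rightarrow> complex" where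
  "euclid_curve x y z \<zeta> = Complex x y + of_real (2 * z) * \<zeta> - Complex x (- y) * \<zeta>\<^sup>2"

end

theory Submission
  imports Defs
begin

(* Expanding the equation of the curve attached to (x,y,z) in the model of
   hyperbolic space H_t gives a bilinear polynomial in (zeta, eta) with coefficients
     a00 = x + iy,   a10 = 1/t + 2z + t(x^2+y^2+z^2),   a11 = -(x - iy),
   and the coefficients of a bilinear polynomial are determined by its values.  Hence
   x + iy = a00_n converges, the rescaled coefficient a10_n - 1/t_n is real and converges,
   and A11 = -conj A00.  The only non-obvious limit is that of z_n: writing
   u = 2z + t z^2 we have (1 + tz)^2 = 1 + tu, and 1 + tz > 0 on H_t, so
   z = u / (sqrt (1 + tu) + 1), which tends to (lim u)/2 as t -> 0.  The limit point
   (Re A00, Im A00, Re A10 / 2) then has Euclidean curve A00 + A10 zeta + A11 zeta^2. *)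

text \<open>Since \<open>r = 1/t\<close>,
  division by \<open>r\<close> is multiplication by \<open>t\<close> (also in the degenerate case \<open>t = 0\<close>).\<close>
lemma hyp_curve_expand:
  "hyp_curve t x y z \<zeta> \<eta> =
     Complex x y + of_real (1 / t + 2 * z + t * (x\<^sup>2 + y\<^sup>2 + z\<^sup>2)) * \<zeta>
     - of_real (1 / t) * \<eta> - cnj (Complex x y) * \<zeta> * \<eta>"
  by (simp add: hyp_curve_def Let_def algebra_simps complex_cnj)

lemma euclid_curve_expand:
  "euclid_curve x y z \<zeta> = Complex x y + of_real (2 * z) * \<zeta> - cnj (Complex x y) * \<zeta>\<^sup>2"
  by (simp add: euclid_curve_def complex_cnj)

lemma bilinear_coeffs_unique:
  fixes a b c d a' b' c' d' :: "'a :: comm_ring_1"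
  assumes "\<And>\<zeta> \<eta>. a + b * \<zeta> + c * \<eta> + d * \<zeta> * \<eta> = a' + b' * \<zeta> + c' * \<eta> + d' * \<zeta> * \<eta>"
  shows "a = a'" and "b = b'" and "c = c'" and "d = d'"
proof -
  show a: "a = a'" using assms[of 0 0] by simp
  show b: "b = b'" using assms[of 1 0] a by simp
  show c: "c = c'" using assms[of 0 1] a by simp
  show "d = d'" using assms[of 1 1] a b c by simp
qed

text \<open>On the region \<open>1 + t z > 0\<close> the height \<open>z\<close> is recovered from \<open>u = 2z + t z\<^sup>2\<close> by
  a formula that stays meaningful at \<open>t = 0\<close>: it is the root of \<open>t z\<^sup>2 + 2z - u\<close>
  that is continuous in \<open>t\<close>.\<close>
lemma height_from_quadratic:
  fixes t z :: real
  assumes pos: "1 + t * z > 0"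
  shows "z = (2 * z + t * z\<^sup>2) / (sqrt (1 + t * (2 * z + t * z\<^sup>2)) + 1)"
proof -
  have "1 + t * (2 * z + t * z\<^sup>2) = (1 + t * z)\<^sup>2"
    by (simp add: power2_eq_square algebra_simps)
  then have "sqrt (1 + t * (2 * z + t * z\<^sup>2)) + 1 = 2 + t * z"
    using pos by simp
  moreover have "2 * z + t * z\<^sup>2 = z * (2 + t * z)"
    by (simp add: power2_eq_square algebra_simps)
  moreover have "2 + t * z \<noteq> 0"
    using pos by simp
  ultimately show ?thesis by simp
qed

lemma height_limit:
  fixes t x y z :: "nat \<Rightarrow> real"
  assumes tpos: "\<And>n. t n > 0" and tlim: "t \<longlonglongrightarrow> 0"
    and inH: "\<And>n. in_H (t n) (x n) (y n) (z n)"
    and xlim: "x \<longlonglongrightarrow> X" and ylim: "y \<longlonglongrightarrow> Y"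
    and slim: "(\<lambda>n. 2 * z n + t n * ((x n)\<^sup>2 + (y n)\<^sup>2 + (z n)\<^sup>2)) \<longlonglongrightarrow> S"
  shows "z \<longlonglongrightarrow> S / 2"
proof -
  define u where "u n = 2 * z n + t n * (z n)\<^sup>2" for n
  have "(\<lambda>n. (2 * z n + t n * ((x n)\<^sup>2 + (y n)\<^sup>2 + (z n)\<^sup>2)) - t n * ((x n)\<^sup>2 + (y n)\<^sup>2))
          \<longlonglongrightarrow> S - 0 * (X\<^sup>2 + Y\<^sup>2)"
    by (intro tendsto_intros slim tlim xlim ylim)
  then have ulim: "u \<longlonglongrightarrow> S"
    by (simp add: u_def[abs_def] algebra_simps)
  have "z = (\<lambda>n. u n / (sqrt (1 + t n * u n) + 1))"
  proof
    fix n
    have "1 + t n * z n > 0"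
      using inH[of n] tpos[of n] by (simp add: in_H_def field_simps)
    then show "z n = u n / (sqrt (1 + t n * u n) + 1)"
      unfolding u_def by (rule height_from_quadratic)
  qed
  moreover have "(\<lambda>n. u n / (sqrt (1 + t n * u n) + 1)) \<longlonglongrightarrow> S / (sqrt (1 + 0 * S) + 1)"
    by (intro tendsto_intros ulim tlim) auto
  ultimately show ?thesis by simp
qed

lemma tendsto_of_real_sequence:
  fixes s :: "nat \<Rightarrow> real"
  assumes "(\<lambda>n. complex_of_real (s n)) \<longlonglongrightarrow> A"
  shows "s \<longlonglongrightarrow> Re A" and "A = complex_of_real (Re A)"
proof -
  show "s \<longlonglongrightarrow> Re A" using tendsto_Re[OF assms] by simp
  have "(\<lambda>n. 0 :: real) \<longlonglongrightarrow> Im A" using tendsto_Im[OF assms] by simp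
  then have "Im A = 0" using LIMSEQ_unique tendsto_const by blast
  then show "A = complex_of_real (Re A)" by (simp add: complex_eq_iff)
qed

theorem mainTheorem1:
  fixes t x y z :: "nat \<Rightarrow> real"
    and a00 a10 a11 :: "nat \<Rightarrow> complex"
    and A00 A10 A11 :: complex
  assumes tpos: "\<And>n. t n > 0"
    and tlim: "t \<longlonglongrightarrow> 0"
    and inH: "\<And>n. in_H (t n) (x n) (y n) (z n)"
    and form: "\<And>n \<zeta> \<eta>. hyp_curve (t n) (x n) (y n) (z n) \<zeta> \<eta>
                 = a00 n + a10 n * \<zeta> - of_real (1 / t n) * \<eta> + a11 n * \<zeta> * \<eta>"
    and lim00: "a00 \<longlonglongrightarrow> A00"
    and lim11: "a11 \<longlonglongrightarrow> A11"
    and lim10: "(\<lambda>n. a10 n - of_real (1 / t n)) \<longlonglongrightarrow> A10"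
  shows "\<exists>x0 y0 z0. (\<lambda>n. (x n, y n, z n)) \<longlonglongrightarrow> (x0, y0, z0)
           \<and> (\<forall>\<zeta>. euclid_curve x0 y0 z0 \<zeta> = A00 + A10 * \<zeta> + A11 * \<zeta>\<^sup>2)"
proof -
  define s where "s n = 2 * z n + t n * ((x n)\<^sup>2 + (y n)\<^sup>2 + (z n)\<^sup>2)" for n
  have coeffs: "a00 n = Complex (x n) (y n)" "a10 n - of_real (1 / t n) = of_real (s n)"
    "a11 n = - cnj (a00 n)" for n
  proof -
    have "Complex (x n) (y n) + of_real (1 / t n + s n) * \<zeta> + - of_real (1 / t n) * \<eta>
            + - cnj (Complex (x n) (y n)) * \<zeta> * \<eta>
          = a00 n + a10 n * \<zeta> + - of_real (1 / t n) * \<eta> + a11 n * \<zeta> * \<eta>" for \<zeta> \<eta>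
      using form[of n \<zeta> \<eta>] by (simp add: hyp_curve_expand s_def add.assoc)
    from bilinear_coeffs_unique[OF this] show "a00 n = Complex (x n) (y n)"
      "a10 n - of_real (1 / t n) = of_real (s n)" "a11 n = - cnj (a00 n)"
      by (auto simp: algebra_simps)
  qed
  have xlim: "x \<longlonglongrightarrow> Re A00" and ylim: "y \<longlonglongrightarrow> Im A00"
    using tendsto_Re[OF lim00] tendsto_Im[OF lim00] by (simp_all add: coeffs(1))
  have "(\<lambda>n. complex_of_real (s n)) \<longlonglongrightarrow> A10"
    using lim10 unfolding coeffs(2) .
  note s_lim = tendsto_of_real_sequence[OF this]
  have zlim: "z \<longlonglongrightarrow> Re A10 / 2"
    using height_limit[OF tpos tlim inH xlim ylim s_lim(1)[unfolded s_def]] .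
  have "a11 \<longlonglongrightarrow> - cnj A00"
    unfolding coeffs(3) by (intro tendsto_intros lim00)
  then have A11: "A11 = - cnj A00"
    using lim11 LIMSEQ_unique by blast
  have "euclid_curve (Re A00) (Im A00) (Re A10 / 2) \<zeta> = A00 + A10 * \<zeta> + A11 * \<zeta>\<^sup>2" for \<zeta>
    unfolding euclid_curve_expand A11 by (subst s_lim(2)) simp
  then show ?thesis
    using tendsto_Pair[OF xlim tendsto_Pair[OF ylim zlim]] by blast
qed

end
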